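(* If $G$ is a finite directed acyclic graph, then the following statements are equivalent: (1) $\mathrm{DT}(G)$ is a cone with one of the edges of $G$ as apex; (2) there is an edge of $G$ which is in all maximal directed forests of $G$; (3) there is a vertex in $G$ with in-degree $1$; (4) $\prod_{v\in V(G)}(d^-(v)-1)=0$; (5) $\mathrm{DT}(G)$ is contractible.
   Context: A directed acyclic graph has no directed cycles. A directed forest is a set of edges which, as a graph, is acyclic with at most one edge directed to each vertex; a maximal directed forest is one not properly contained in another directed forest of $G$. $\mathrm{DT}(G)$ is the simplicial complex with vertex set $E(G)$ whose simplices are the directed forests. $d^-(v)$ denotes the in-degree of $v$ (number of edges directed to $v$). *)

theory Defs
  imports "HOL-Analysis.Analysis"
begin

text \<open>A finite directed graph is given by a vertex set V and an edge set
E of ordered pairs (u,v), meaning an edge directed from u to v.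
Acyclicity is the library notion acyclic (no directed cycles).\<close>

definition in_degree :: "('v \<times> 'v) set \<Rightarrow> 'v \<Rightarrow> nat" where
  "in_degree E v = card {e \<in> E. snd e = v}"

definition directed_forest :: "('v \<times> 'v) set \<Rightarrow> ('v \<times> 'v) set \<Rightarrow> bool" where
  "directed_forest E F \<longleftrightarrow> F \<subseteq> E \<and> acyclic F \<and> (\<forall>v. in_degree F v \<le> 1)"

definition maximal_directed_forest :: "('v \<times> 'v) set \<Rightarrow> ('v \<times> 'v) set \<Rightarrow> bool" where
  "maximal_directed_forest E F \<longleftrightarrow> directed_forest E F \<and>
     \<not> (\<exists>F'. directed_forest E F' \<and> F \<subset> F')"

text \<open>DT(G): the simplicial complex on vertex set E whose simplices are the
directed forests (given by its set of faces).\<close>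
definition DT :: "('v \<times> 'v) set \<Rightarrow> ('v \<times> 'v) set set" where
  "DT E = {F. directed_forest E F}"

definition is_cone_with_apex :: "'a set \<Rightarrow> 'a set set \<Rightarrow> 'a \<Rightarrow> bool" where
  "is_cone_with_apex X K a \<longleftrightarrow> a \<in> X \<and> (\<forall>\<sigma>\<in>K. insert a \<sigma> \<in> K)"

text \<open>Geometric realization of a finite simplicial complex K on ground set X,
as the set of barycentric-coordinate functions X \<Rightarrow> real (zero outside X)
whose support is a simplex, with the (product) topology on functions.\<close>
definition geom_realization :: "'a set \<Rightarrow> 'a set set \<Rightarrow> ('a \<Rightarrow> real) set" where
  "geom_realization X K = {f. (\<forall>x. 0 \<le> f x) \<and> {x. f x \<noteq> 0} \<in> K \<and>
       {x. f x \<noteq> 0} \<subseteq> X \<and> sum f X = 1}"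

definition contractible_complex :: "'a set \<Rightarrow> 'a set set \<Rightarrow> bool" where
  "contractible_complex X K \<longleftrightarrow> geom_realization X K \<noteq> {} \<and> contractible (geom_realization X K)"

end

(* Since G is acyclic, a set of edges is a directed forest exactly when no two of its edges have
   the same head, so DT(G) is the join, over the vertices, of the discrete sets of edges entering
   them. An edge is a cone apex, and lies in every maximal forest, exactly when it is the only edge
   entering its head; a cone contracts to its apex along straight lines. Otherwise every head v_i
   (i < k) is entered by two edges a_i, b_i, and the sphere S^(k-1) is a retract of the
   realization: x on the sphere goes to the point with weight max(x_i,0) on a_i and max(-x_i,0)
   on b_i, normalised to total mass 1, and a point of the realization goes back via the signed
   masses it puts on the sets of edges with a common head. Spheres are not contractible. *)

theory Submission
  imports Defs "HOL-Homology.Brouwer_Degree"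
begin

lemma in_degree_le_1_iff_inj_on:
  assumes "finite F"
  shows "(\<forall>v. in_degree F v \<le> 1) \<longleftrightarrow> inj_on snd F"
proof -
  have in_degree_le_1: "in_degree F v \<le> 1 \<longleftrightarrow> (\<forall>x\<in>{e\<in>F. snd e = v}. \<forall>y\<in>{e\<in>F. snd e = v}. x = y)"
    for v
    unfolding in_degree_def One_nat_def by (rule card_le_Suc0_iff_eq) (simp add: assms)
  show ?thesis
  proof
    assume "\<forall>v. in_degree F v \<le> 1"
    then show "inj_on snd F"
      unfolding in_degree_le_1 by (intro inj_onI) blast
  next
    assume inj: "inj_on snd F"
    show "\<forall>v. in_degree F v \<le> 1"
      unfolding in_degree_le_1 by (blast intro: inj_onD[OF inj])
  qed
qed

lemma directed_forest_iff_inj_on: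
  assumes "finite E" "acyclic E"
  shows "directed_forest E F \<longleftrightarrow> F \<subseteq> E \<and> inj_on snd F"
proof (cases "F \<subseteq> E")
  case True
  have "finite F" using assms(1) True by (rule finite_subset[rotated])
  moreover have "acyclic F" using assms(2) True by (rule acyclic_subset)
  ultimately show ?thesis unfolding directed_forest_def using in_degree_le_1_iff_inj_on by blast
qed (simp add: directed_forest_def)

lemma DT_eq_inj_on:
  assumes "finite E" "acyclic E"
  shows "DT E = {F. F \<subseteq> E \<and> inj_on snd F}"
  using directed_forest_iff_inj_on[OF assms] by (auto simp: DT_def)

lemma in_degree_eq_1_iff:
  assumes "finite E" "e \<in> E"
  shows "in_degree E (snd e) = 1 \<longleftrightarrow> (\<forall>e'\<in>E. snd e' = snd e \<longrightarrow> e' = e)"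
proof -
  let ?S = "{e'\<in>E. snd e' = snd e}"
  have "e \<in> ?S" using assms(2) by simp
  have "card ?S = 1 \<longleftrightarrow> ?S = {e}"
  proof
    assume "card ?S = 1"
    then obtain x where "?S = {x}" by (rule card_1_singletonE)
    with \<open>e \<in> ?S\<close> show "?S = {e}" by simp
  qed simp
  then show ?thesis unfolding in_degree_def using assms(2) by auto
qed

lemma ex_in_degree_1_iff_ex_edge:
  assumes "E \<subseteq> V \<times> V"
  shows "(\<exists>v\<in>V. in_degree E v = 1) \<longleftrightarrow> (\<exists>e\<in>E. in_degree E (snd e) = 1)"
proof
  assume "\<exists>v\<in>V. in_degree E v = 1"
  then obtain v where v: "in_degree E v = 1" by blast
  then obtain e where "{e\<in>E. snd e = v} = {e}"
    unfolding in_degree_def by (rule card_1_singletonE)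
  then have "e \<in> {e\<in>E. snd e = v}" by simp
  then show "\<exists>e\<in>E. in_degree E (snd e) = 1" using v by auto
next
  assume "\<exists>e\<in>E. in_degree E (snd e) = 1"
  then obtain e where "e \<in> E" "in_degree E (snd e) = 1" by blast
  moreover have "snd e \<in> V" using \<open>e \<in> E\<close> assms by auto
  ultimately show "\<exists>v\<in>V. in_degree E v = 1" by blast
qed

lemma cone_apex_iff_in_degree_1:
  assumes "finite E" "acyclic E"
  shows "is_cone_with_apex E (DT E) e \<longleftrightarrow> e \<in> E \<and> in_degree E (snd e) = 1"
proof
  assume cone: "is_cone_with_apex E (DT E) e"
  then have e: "e \<in> E" by (simp add: is_cone_with_apex_def)
  have "\<forall>e'\<in>E. snd e' = snd e \<longrightarrow> e' = e"
  proof (intro ballI impI)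
    fix e' assume "e' \<in> E" "snd e' = snd e"
    then have "{e'} \<in> DT E" by (simp add: DT_eq_inj_on[OF assms])
    then have "insert e {e'} \<in> DT E" using cone by (simp add: is_cone_with_apex_def)
    then have "inj_on snd {e, e'}" by (simp add: DT_eq_inj_on[OF assms])
    then show "e' = e" by (rule inj_onD) (simp_all add: \<open>snd e' = snd e\<close>)
  qed
  then show "e \<in> E \<and> in_degree E (snd e) = 1"
    using e in_degree_eq_1_iff[OF assms(1) e] by blast
next
  assume asm: "e \<in> E \<and> in_degree E (snd e) = 1"
  then have e: "e \<in> E" by simp
  have "\<forall>e'\<in>E. snd e' = snd e \<longrightarrow> e' = e"
    using in_degree_eq_1_iff[OF assms(1) e] conjunct2[OF asm] by (rule iffD1)
  then have unique: "e' = e" if "e' \<in> E" "snd e' = snd e" for e'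
    using that by blast
  have "insert e \<sigma> \<in> DT E" if "\<sigma> \<in> DT E" for \<sigma>
  proof -
    have \<sigma>: "\<sigma> \<subseteq> E" "inj_on snd \<sigma>" using that unfolding DT_eq_inj_on[OF assms] by blast+
    have "snd e \<notin> snd ` (\<sigma> - {e})"
    proof
      assume "snd e \<in> snd ` (\<sigma> - {e})"
      then obtain e' where "snd e = snd e'" "e' \<in> \<sigma> - {e}" by (rule imageE)
      then have "e' \<in> E" "snd e' = snd e" "e' \<noteq> e" using \<sigma>(1) by auto
      then show False using unique by blast
    qed
    then show ?thesis using \<sigma> e by (simp add: DT_eq_inj_on[OF assms])
  qed
  then show "is_cone_with_apex E (DT E) e" using e by (simp add: is_cone_with_apex_def)
qed

lemma cone_apex_in_maximal_directed_forest:
  assumes "is_cone_with_apex E (DT E) e" "maximal_directed_forest E F"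
  shows "e \<in> F"
proof (rule ccontr)
  assume "e \<notin> F"
  have "directed_forest E (insert e F)"
    using assms unfolding is_cone_with_apex_def maximal_directed_forest_def DT_def by blast
  moreover have "F \<subset> insert e F" using \<open>e \<notin> F\<close> by blast
  ultimately show False using assms(2) unfolding maximal_directed_forest_def by blast
qed

lemma maximal_directed_forest_extends:
  assumes "finite E" "directed_forest E F\<^sub>0"
  obtains F where "maximal_directed_forest E F" "F\<^sub>0 \<subseteq> F"
proof -
  let ?A = "{F. directed_forest E F \<and> F\<^sub>0 \<subseteq> F}"
  have "finite ?A"
    by (rule finite_subset[of _ "Pow E"]) (use assms(1) in \<open>auto simp: directed_forest_def\<close>)
  moreover have "?A \<noteq> {}" using assms(2) by blast
  ultimately have "\<exists>F\<in>?A. \<forall>F'\<in>?A. F \<le> F' \<longrightarrow> F = F'" by (rule finite_has_maximal)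
  then obtain F where F: "F \<in> ?A" and max: "\<forall>F'\<in>?A. F \<le> F' \<longrightarrow> F = F'" by blast
  have "\<not> F \<subset> F'" if "directed_forest E F'" for F'
  proof
    assume "F \<subset> F'"
    then have "F' \<in> ?A" using F that by auto
    moreover have "F \<le> F'" using \<open>F \<subset> F'\<close> by (rule less_imp_le)
    ultimately have "F = F'" using max by blast
    then show False using \<open>F \<subset> F'\<close> by simp
  qed
  then have "maximal_directed_forest E F"
    using F unfolding maximal_directed_forest_def by blast
  then show thesis using that F by blast
qed

lemma in_all_maximal_directed_forests_iff:
  assumes "finite E" "acyclic E" "e \<in> E"
  shows "(\<forall>F. maximal_directed_forest E F \<longrightarrow> e \<in> F) \<longleftrightarrow> in_degree E (snd e) = 1"
proof
  assume all: "\<forall>F. maximal_directed_forest E F \<longrightarrow> e \<in> F"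
  have "e' = e" if "e' \<in> E" "snd e' = snd e" for e'
  proof -
    have "directed_forest E {e'}" using that(1) by (simp add: directed_forest_iff_inj_on[OF assms(1,2)])
    then obtain F where F: "maximal_directed_forest E F" "e' \<in> F"
      using maximal_directed_forest_extends[OF assms(1)] by blast
    then have "directed_forest E F" by (simp add: maximal_directed_forest_def)
    then have "inj_on snd F" by (simp add: directed_forest_iff_inj_on[OF assms(1,2)])
    moreover have "e \<in> F" using all F(1) by blast
    ultimately show ?thesis using F(2) that(2) by (blast dest: inj_onD)
  qed
  then show "in_degree E (snd e) = 1" using in_degree_eq_1_iff[OF assms(1,3)] by blast
next
  assume "in_degree E (snd e) = 1"
  then have "is_cone_with_apex E (DT E) e"
    using cone_apex_iff_in_degree_1[OF assms(1,2)] assms(3) by blast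
  then show "\<forall>F. maximal_directed_forest E F \<longrightarrow> e \<in> F"
    using cone_apex_in_maximal_directed_forest by blast
qed

lemma continuous_on_coordinate [continuous_intros]:
  "continuous_on S (\<lambda>f::'a \<Rightarrow> 'b::topological_space. f i)"
  by (rule continuous_on_subset[OF continuous_on_product_coordinates]) simp

lemma cone_segment_in_geom_realization:
  fixes f :: "'a \<Rightarrow> real"
  assumes "finite X" and cone: "is_cone_with_apex X K c" and "{c} \<in> K"
    and f: "f \<in> geom_realization X K" and t: "0 \<le> t" "t \<le> 1"
  shows "(\<lambda>x. (1 - t) * f x + t * (if x = c then 1 else 0)) \<in> geom_realization X K"
    (is "?g \<in> _")
proof -
  have f_nonneg: "0 \<le> f x" for x using f by (simp add: geom_realization_def)
  have supp_f: "{x. f x \<noteq> 0} \<in> K" "{x. f x \<noteq> 0} \<subseteq> X" and sum_f: "sum f X = 1"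
    using f by (simp_all add: geom_realization_def)
  have c: "c \<in> X" using cone by (simp add: is_cone_with_apex_def)
  have supp_g: "{x. ?g x \<noteq> 0} \<in> K \<and> {x. ?g x \<noteq> 0} \<subseteq> X"
  proof -
    consider "t = 0" | "t = 1" | "0 < t" "t < 1" using t by linarith
    then show ?thesis
    proof cases
      case 1
      then show ?thesis using supp_f by simp
    next
      case 2
      then have "{x. ?g x \<noteq> 0} = {c}" by auto
      then show ?thesis using c \<open>{c} \<in> K\<close> by simp
    next
      case 3
      have "?g x \<noteq> 0 \<longleftrightarrow> x = c \<or> f x \<noteq> 0" for x
      proof (cases "x = c")
        case True
        have "0 \<le> (1 - t) * f x" using 3 f_nonneg[of x] by simp
        then show ?thesis using 3 True by simp
      qed (use 3 in simp)
      then have "{x. ?g x \<noteq> 0} = insert c {x. f x \<noteq> 0}" by blast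
      then show ?thesis using cone supp_f c by (simp add: is_cone_with_apex_def)
    qed
  qed
  have "sum ?g X = (1 - t) * sum f X + t * sum (\<lambda>x. if x = c then 1 else 0) X"
    by (simp add: sum.distrib sum_distrib_left)
  also have "\<dots> = 1" using sum_f c \<open>finite X\<close> by simp
  finally have "sum ?g X = 1" .
  moreover have "0 \<le> ?g x" for x using f_nonneg[of x] t by simp
  ultimately show ?thesis using supp_g by (simp add: geom_realization_def)
qed

lemma contractible_complex_cone:
  assumes "finite X" "{} \<in> K" and cone: "is_cone_with_apex X K c"
  shows "contractible_complex X K"
proof -
  let ?R = "geom_realization X K"
  define \<delta> where "\<delta> x = (if x = c then 1 else 0 :: real)" for x
  define H :: "real \<times> ('a \<Rightarrow> real) \<Rightarrow> 'a \<Rightarrow> real"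
    where "H = (\<lambda>p x. (1 - fst p) * snd p x + fst p * \<delta> x)"
  have "{c} \<in> K" using cone assms(2) unfolding is_cone_with_apex_def by fastforce
  have c: "c \<in> X" using cone by (simp add: is_cone_with_apex_def)
  have "{x. \<delta> x \<noteq> 0} = {c}" by (auto simp: \<delta>_def)
  moreover have "sum \<delta> X = 1" using c \<open>finite X\<close> by (simp add: \<delta>_def)
  ultimately have "\<delta> \<in> ?R" using c \<open>{c} \<in> K\<close> by (simp add: geom_realization_def \<delta>_def)
  have H_cont: "continuous_on ({0..1} \<times> ?R) H"
    unfolding H_def
    by (intro continuous_intros continuous_on_product_then_coordinatewise[OF continuous_on_snd])
  have H_image: "H ` ({0..1} \<times> ?R) \<subseteq> ?R"
    using cone_segment_in_geom_realization[OF \<open>finite X\<close> cone \<open>{c} \<in> K\<close>]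
    by (auto simp: H_def \<delta>_def)
  have "homotopic_with_canon (\<lambda>_. True) ?R ?R id (\<lambda>_. \<delta>)"
    unfolding homotopic_with_def
  proof (intro exI[of _ H] conjI allI ballI)
    show "continuous_map (prod_topology (top_of_set {0..1}) (top_of_set ?R)) (top_of_set ?R) H"
      using H_cont H_image by (auto simp: image_subset_iff_funcset[symmetric])
  qed (simp_all add: H_def)
  then show ?thesis
    using \<open>\<delta> \<in> ?R\<close> unfolding contractible_complex_def contractible_def by blast
qed

lemma max_0_plus_max_neg_0: "max t 0 + max (- t) 0 = \<bar>t\<bar>" for t :: real
  by (simp add: max_def)

lemma max_0_minus_max_neg_0: "max t 0 - max (- t) 0 = t" for t :: real
  by (simp add: max_def)

locale fibre_pairing =
  fixes X :: "'a set" and h :: "'a \<Rightarrow> 'b" and k :: nat and a b :: "nat \<Rightarrow> 'a"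
  assumes finite_X: "finite X"
    and k_pos: "0 < k"
    and a_in_X: "i < k \<Longrightarrow> a i \<in> X"
    and b_in_X: "i < k \<Longrightarrow> b i \<in> X"
    and a_neq_b: "i < k \<Longrightarrow> a i \<noteq> b i"
    and h_b_eq_h_a: "i < k \<Longrightarrow> h (b i) = h (a i)"
    and inj_on_h_a: "inj_on (\<lambda>i. h (a i)) {..<k}"
    and h_X_subset: "h ` X \<subseteq> (\<lambda>i. h (a i)) ` {..<k}"
begin

abbreviation realization :: "('a \<Rightarrow> real) set" where
  "realization \<equiv> geom_realization X {F. F \<subseteq> X \<and> inj_on h F}"

abbreviation coord_sphere :: "(nat \<Rightarrow> real) set" where
  "coord_sphere \<equiv> {x. (\<Sum>i<k. (x i)\<^sup>2) = 1 \<and> (\<forall>i\<ge>k. x i = 0)}"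

lemma h_a_eq_iff [simp]: "i < k \<Longrightarrow> j < k \<Longrightarrow> h (a i) = h (a j) \<longleftrightarrow> i = j"
  using inj_on_h_a by (auto simp: inj_on_def)

lemma a_neq_b_index [simp]:
  assumes "i < k" "j < k"
  shows "a i \<noteq> b j"
  using a_neq_b[OF assms(2)] h_a_eq_iff[OF assms] h_b_eq_h_a[OF assms(2)] by auto

lemma b_eq_iff [simp]:
  assumes "i < k" "j < k"
  shows "b i = b j \<longleftrightarrow> i = j"
  using h_a_eq_iff[OF assms] h_b_eq_h_a[OF assms(1)] h_b_eq_h_a[OF assms(2)] by auto

definition fibre :: "nat \<Rightarrow> 'a set" where
  "fibre i = {e \<in> X. h e = h (a i)}"

lemma finite_fibre: "finite (fibre i)"
  using finite_X by (simp add: fibre_def)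

lemma a_in_fibre_iff [simp]: "i < k \<Longrightarrow> j < k \<Longrightarrow> a j \<in> fibre i \<longleftrightarrow> j = i"
  by (auto simp: fibre_def a_in_X)

lemma b_in_fibre_iff [simp]: "i < k \<Longrightarrow> j < k \<Longrightarrow> b j \<in> fibre i \<longleftrightarrow> j = i"
  by (auto simp: fibre_def b_in_X h_b_eq_h_a)

lemma in_some_fibre:
  assumes "e \<in> X"
  obtains i where "i < k" "e \<in> fibre i"
  using assms h_X_subset unfolding fibre_def by blast

(* A point f of the realization is nonzero at no more than one element of each fibre;
   signed_mass f i is that value, negated if the element is b i. *)
definition signed_mass :: "('a \<Rightarrow> real) \<Rightarrow> nat \<Rightarrow> real" where
  "signed_mass f i = sum f (fibre i) - 2 * f (b i)"

definition lift :: "(nat \<Rightarrow> real) \<Rightarrow> 'a \<Rightarrow> real" where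
  "lift x e = (\<Sum>i<k. (if e = a i then max (x i) 0 else 0) + (if e = b i then max (- x i) 0 else 0))
     / (\<Sum>i<k. \<bar>x i\<bar>)"

lemma sum_lift:
  assumes "finite A"
  shows "sum (lift x) A =
    (\<Sum>i<k. (if a i \<in> A then max (x i) 0 else 0) + (if b i \<in> A then max (- x i) 0 else 0))
      / (\<Sum>i<k. \<bar>x i\<bar>)"
proof -
  have "sum (lift x) A = (\<Sum>e\<in>A. \<Sum>i<k. (if e = a i then max (x i) 0 else 0)
      + (if e = b i then max (- x i) 0 else 0)) / (\<Sum>i<k. \<bar>x i\<bar>)"
    unfolding lift_def by (rule sum_divide_distrib[symmetric])
  also have "(\<Sum>e\<in>A. \<Sum>i<k. (if e = a i then max (x i) 0 else 0) + (if e = b i then max (- x i) 0 else 0))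
      = (\<Sum>i<k. \<Sum>e\<in>A. (if e = a i then max (x i) 0 else 0) + (if e = b i then max (- x i) 0 else 0))"
    by (rule sum.swap)
  finally show ?thesis using assms by (simp add: sum.distrib)
qed

lemma sum_abs_pos:
  assumes "x \<in> coord_sphere"
  shows "0 < (\<Sum>i<k. \<bar>x i\<bar>)"
proof (rule ccontr)
  assume "\<not> 0 < (\<Sum>i<k. \<bar>x i\<bar>)"
  then have "(\<Sum>i<k. \<bar>x i\<bar>) = 0" by (simp add: sum_nonneg order.antisym)
  then have "\<forall>i<k. x i = 0" by (simp add: sum_nonneg_eq_0_iff)
  then show False using assms by simp
qed

lemma lift_nonneg: "x \<in> coord_sphere \<Longrightarrow> 0 \<le> lift x e"
  unfolding lift_def by (intro divide_nonneg_pos sum_nonneg add_nonneg_nonneg sum_abs_pos) auto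

lemma lift_neq_0_cases:
  assumes "lift x e \<noteq> 0"
  obtains i where "i < k" "e = a i" "0 < x i" | i where "i < k" "e = b i" "x i < 0"
proof -
  have "(\<Sum>i<k. (if e = a i then max (x i) 0 else 0) + (if e = b i then max (- x i) 0 else 0)) \<noteq> 0"
    using assms by (auto simp: lift_def)
  then obtain i where i: "i < k"
    and "(if e = a i then max (x i) 0 else 0) + (if e = b i then max (- x i) 0 else 0) \<noteq> 0"
    by (meson lessThan_iff sum.neutral)
  then have "e = a i \<and> 0 < x i \<or> e = b i \<and> x i < 0"
    using a_neq_b[OF i] by (auto simp: max_def split: if_splits)
  then show thesis using that i by blast
qed

lemma lift_in_realization:
  assumes x: "x \<in> coord_sphere"
  shows "lift x \<in> realization"
proof -
  let ?S = "{e. lift x e \<noteq> 0}"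
  have "?S \<subseteq> X"
  proof
    fix e assume "e \<in> ?S"
    then have "lift x e \<noteq> 0" by simp
    then show "e \<in> X" by (rule lift_neq_0_cases) (simp_all add: a_in_X b_in_X)
  qed
  moreover have "inj_on h ?S"
  proof (rule inj_onI)
    fix e e' assume "e \<in> ?S" "e' \<in> ?S" and h_eq: "h e = h e'"
    obtain i where i: "i < k" "e = a i \<and> 0 < x i \<or> e = b i \<and> x i < 0"
      using lift_neq_0_cases[of x e] \<open>e \<in> ?S\<close> by auto
    obtain j where j: "j < k" "e' = a j \<and> 0 < x j \<or> e' = b j \<and> x j < 0"
      using lift_neq_0_cases[of x e'] \<open>e' \<in> ?S\<close> by auto
    have "h e = h (a i)" "h e' = h (a j)" using i j h_b_eq_h_a by auto
    then have "i = j" using h_eq i(1) j(1) by simp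
    then show "e = e'" using i j by auto
  qed
  moreover have "sum (lift x) X = 1"
  proof -
    have "sum (lift x) X = (\<Sum>i<k. max (x i) 0 + max (- x i) 0) / (\<Sum>i<k. \<bar>x i\<bar>)"
      by (simp add: sum_lift finite_X a_in_X b_in_X)
    also have "\<dots> = 1" using sum_abs_pos[OF x] by (simp add: max_0_plus_max_neg_0)
    finally show ?thesis .
  qed
  ultimately show ?thesis using lift_nonneg[OF x] by (simp add: geom_realization_def)
qed

lemma signed_mass_lift:
  assumes "i < k"
  shows "signed_mass (lift x) i = x i / (\<Sum>j<k. \<bar>x j\<bar>)"
proof -
  let ?L = "\<Sum>j<k. \<bar>x j\<bar>"
  have "sum (lift x) (fibre i) = (\<Sum>j<k. (if j = i then max (x j) 0 else 0)
      + (if j = i then max (- x j) 0 else 0)) / ?L"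
    using assms by (simp add: sum_lift finite_fibre)
  also have "\<dots> = max (x i) 0 / ?L + max (- x i) 0 / ?L"
    using assms by (simp add: sum.distrib add_divide_distrib)
  finally have "sum (lift x) (fibre i) = max (x i) 0 / ?L + max (- x i) 0 / ?L" .
  moreover have "lift x (b i) = max (- x i) 0 / ?L"
    using sum_lift[of "{b i}" x] assms by simp
  ultimately have "sum (lift x) (fibre i) - 2 * lift x (b i) = (max (x i) 0 - max (- x i) 0) / ?L"
    by (simp add: diff_divide_distrib)
  then show ?thesis by (simp add: signed_mass_def max_0_minus_max_neg_0)
qed

lemma realization_fibre_unique:
  assumes f: "f \<in> realization" and "e \<in> fibre i" "e' \<in> fibre i" "f e \<noteq> 0" "f e' \<noteq> 0"
  shows "e' = e"
proof -
  have "inj_on h {x. f x \<noteq> 0}" using f by (simp add: geom_realization_def)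
  moreover have "h e' = h e" using assms(2,3) by (simp add: fibre_def)
  ultimately show ?thesis by (rule inj_onD) (simp_all add: assms(4,5))
qed

lemma realization_fibre_sum:
  assumes f: "f \<in> realization" and e: "e \<in> fibre i" "f e \<noteq> 0"
  shows "sum f (fibre i) = f e"
proof -
  have "sum f (fibre i) = f e + sum f (fibre i - {e})"
    using finite_fibre e(1) by (rule sum.remove)
  also have "sum f (fibre i - {e}) = 0"
    using realization_fibre_unique[OF f e(1) _ e(2)] by (intro sum.neutral) blast
  finally show ?thesis by simp
qed

lemma signed_mass_neq_0:
  assumes f: "f \<in> realization" and i: "i < k" and e: "e \<in> fibre i" "f e \<noteq> 0"
  shows "signed_mass f i \<noteq> 0"
proof (cases "f (b i) = 0")
  case True
  then show ?thesis using realization_fibre_sum[OF f e] e(2) by (simp add: signed_mass_def)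
next
  case False
  then have "b i = e" using realization_fibre_unique[OF f e(1) _ e(2)] i by simp
  then show ?thesis using realization_fibre_sum[OF f e] e(2) by (simp add: signed_mass_def)
qed

lemma signed_mass_norm_pos:
  assumes f: "f \<in> realization"
  shows "0 < (\<Sum>i<k. (signed_mass f i)\<^sup>2)"
proof -
  have "sum f X = 1" using f by (simp add: geom_realization_def)
  then obtain e where "e \<in> X" "f e \<noteq> 0" using sum.neutral by force
  moreover obtain i where "i < k" "e \<in> fibre i" using \<open>e \<in> X\<close> by (rule in_some_fibre)
  ultimately have "signed_mass f i \<noteq> 0" using signed_mass_neq_0[OF f] by blast
  then show ?thesis using \<open>i < k\<close> by (intro sum_pos2[of _ i]) auto
qed

definition to_sphere :: "('a \<Rightarrow> real) \<Rightarrow> nat \<Rightarrow> real" where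
  "to_sphere f i = (if i < k then signed_mass f i / sqrt (\<Sum>j<k. (signed_mass f j)\<^sup>2) else 0)"

lemma to_sphere_in_coord_sphere:
  assumes f: "f \<in> realization"
  shows "to_sphere f \<in> coord_sphere"
proof -
  let ?N = "\<Sum>j<k. (signed_mass f j)\<^sup>2"
  have N: "0 < ?N" using signed_mass_norm_pos[OF f] .
  have "(\<Sum>i<k. (to_sphere f i)\<^sup>2) = (\<Sum>i<k. (signed_mass f i)\<^sup>2 / ?N)"
    using N by (simp add: to_sphere_def power_divide)
  also have "\<dots> = 1" using N by (simp add: sum_divide_distrib[symmetric])
  finally show ?thesis by (simp add: to_sphere_def)
qed

lemma to_sphere_lift:
  assumes x: "x \<in> coord_sphere"
  shows "to_sphere (lift x) = x"
proof
  fix i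
  let ?L = "\<Sum>j<k. \<bar>x j\<bar>"
  have L: "0 < ?L" using sum_abs_pos[OF x] .
  have "(\<Sum>j<k. (signed_mass (lift x) j)\<^sup>2) = (\<Sum>j<k. (x j)\<^sup>2) / ?L\<^sup>2"
    by (simp add: signed_mass_lift power_divide sum_divide_distrib)
  also have "\<dots> = (1 / ?L)\<^sup>2" using x by (simp add: power_divide)
  finally have "sqrt (\<Sum>j<k. (signed_mass (lift x) j)\<^sup>2) = 1 / ?L" using L by simp
  then show "to_sphere (lift x) i = x i" using x L by (simp add: to_sphere_def signed_mass_lift)
qed

lemma continuous_on_to_sphere: "continuous_on realization to_sphere"
proof (rule continuous_on_coordinatewise_then_product)
  fix i
  have "continuous_on realization (\<lambda>f. signed_mass f i / sqrt (\<Sum>j<k. (signed_mass f j)\<^sup>2))"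
    using signed_mass_norm_pos unfolding signed_mass_def
    by (intro continuous_intros) (auto simp: less_imp_neq[symmetric])
  then show "continuous_on realization (\<lambda>f. to_sphere f i)"
    by (cases "i < k") (simp_all add: to_sphere_def)
qed

lemma continuous_on_lift: "continuous_on coord_sphere lift"
proof (rule continuous_on_coordinatewise_then_product)
  fix e
  have if_cont: "continuous_on coord_sphere (\<lambda>x. if P then g x else 0)"
    if "continuous_on coord_sphere g" for P and g :: "(nat \<Rightarrow> real) \<Rightarrow> real"
    using that by (cases P) simp_all
  show "continuous_on coord_sphere (\<lambda>x. lift x e)"
    using sum_abs_pos unfolding lift_def
    by (intro continuous_intros if_cont) (auto simp: less_imp_neq[symmetric])
qed

lemma nsphere_eq_coord_sphere: "nsphere (k - 1) = top_of_set coord_sphere"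
proof -
  have "{..k - 1} = {..<k}" "(\<forall>i>k - 1. x i = 0) \<longleftrightarrow> (\<forall>i\<ge>k. x i = 0)" for x :: "nat \<Rightarrow> real"
    using k_pos by auto
  then show ?thesis by (simp add: nsphere euclidean_product_topology)
qed

lemma retraction_map_to_sphere:
  "retraction_map (top_of_set realization) (nsphere (k - 1)) to_sphere"
  unfolding nsphere_eq_coord_sphere retraction_map_def retraction_maps_def
  using continuous_on_to_sphere continuous_on_lift to_sphere_in_coord_sphere lift_in_realization
    to_sphere_lift
  by (intro exI[of _ lift]) auto

lemma not_contractible_realization: "\<not> contractible realization"
  using contractible_space_retraction_map_image[OF retraction_map_to_sphere]
    non_contractible_space_nsphere by auto

end

lemma fibre_pairing_exists:
  assumes "finite X" "X \<noteq> {}" and sibling: "\<forall>x\<in>X. \<exists>y\<in>X. y \<noteq> x \<and> h y = h x"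
  obtains k a b where "fibre_pairing X h k a b"
proof -
  define k where "k = card (h ` X)"
  have "0 < k" using assms(1,2) by (simp add: k_def card_gt_0_iff)
  have "\<exists>\<iota>. bij_betw \<iota> {0..<k} (h ` X)"
    unfolding k_def using assms(1) by (intro ex_bij_betw_nat_finite) simp
  then obtain \<iota> where \<iota>: "bij_betw \<iota> {..<k} (h ` X)" by (auto simp: atLeast0LessThan)
  have "\<forall>i\<in>{..<k}. \<exists>x. x \<in> X \<and> h x = \<iota> i"
  proof
    fix i assume "i \<in> {..<k}"
    then have "\<iota> i \<in> h ` X" by (rule bspec[OF bij_betwE[OF \<iota>]])
    then show "\<exists>x. x \<in> X \<and> h x = \<iota> i" by (elim imageE) auto
  qed
  from bchoice[OF this] obtain a where a: "\<forall>i\<in>{..<k}. a i \<in> X \<and> h (a i) = \<iota> i" by blast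
  have "\<forall>i\<in>{..<k}. \<exists>y. y \<in> X \<and> y \<noteq> a i \<and> h y = h (a i)"
  proof
    fix i assume "i \<in> {..<k}"
    then have "a i \<in> X" using a by blast
    then obtain y where "y \<in> X" "y \<noteq> a i" "h y = h (a i)" using sibling by blast
    then show "\<exists>y. y \<in> X \<and> y \<noteq> a i \<and> h y = h (a i)" by blast
  qed
  from bchoice[OF this] obtain b where b: "\<forall>i\<in>{..<k}. b i \<in> X \<and> b i \<noteq> a i \<and> h (b i) = h (a i)" by blast
  have "inj_on (\<lambda>i. h (a i)) {..<k} \<longleftrightarrow> inj_on \<iota> {..<k}"
    by (rule inj_on_cong) (use a in blast)
  moreover have "(\<lambda>i. h (a i)) ` {..<k} = \<iota> ` {..<k}"
    by (rule image_cong) (use a in blast)+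
  ultimately have "inj_on (\<lambda>i. h (a i)) {..<k}" "(\<lambda>i. h (a i)) ` {..<k} = h ` X"
    using bij_betw_imp_inj_on[OF \<iota>] bij_betw_imp_surj_on[OF \<iota>] by simp_all
  moreover have "a i \<in> X" "b i \<in> X" "a i \<noteq> b i" "h (b i) = h (a i)" if "i < k" for i
    using bspec[OF a, of i] bspec[OF b, of i] that by auto
  ultimately show thesis
    using that[of k a b] assms(1) \<open>0 < k\<close> unfolding fibre_pairing_def by blast
qed

lemma not_contractible_complex_inj_on:
  assumes "finite X" "\<forall>x\<in>X. \<exists>y\<in>X. y \<noteq> x \<and> h y = h x"
  shows "\<not> contractible_complex X {F. F \<subseteq> X \<and> inj_on h F}"
proof (cases "X = {}")
  case True
  then show ?thesis by (simp add: contractible_complex_def geom_realization_def)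
next
  case False
  then obtain k a b where "fibre_pairing X h k a b"
    using fibre_pairing_exists assms by blast
  then show ?thesis
    by (simp add: contractible_complex_def fibre_pairing.not_contractible_realization)
qed

lemma contractible_DT_iff:
  assumes "finite E" "acyclic E"
  shows "contractible_complex E (DT E) \<longleftrightarrow> (\<exists>e\<in>E. in_degree E (snd e) = 1)"
proof
  assume "\<exists>e\<in>E. in_degree E (snd e) = 1"
  then obtain e where apex: "is_cone_with_apex E (DT E) e"
    using cone_apex_iff_in_degree_1[OF assms] by blast
  have "{} \<in> DT E" by (simp add: DT_eq_inj_on[OF assms])
  then show "contractible_complex E (DT E)" using apex by (rule contractible_complex_cone[OF assms(1)])
next
  assume "contractible_complex E (DT E)"
  then have "\<not> (\<forall>e\<in>E. \<exists>e'\<in>E. e' \<noteq> e \<and> snd e' = snd e)"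
    using not_contractible_complex_inj_on[OF assms(1), of snd] unfolding DT_eq_inj_on[OF assms] by blast
  then obtain e where e: "e \<in> E" and unique: "\<forall>e'\<in>E. snd e' = snd e \<longrightarrow> e' = e" by blast
  have "in_degree E (snd e) = 1" using in_degree_eq_1_iff[OF assms(1) e] unique by (rule iffD2)
  then show "\<exists>e\<in>E. in_degree E (snd e) = 1" using e by blast
qed

theorem corollary2p13:
  fixes V :: "'v set" and E :: "('v \<times> 'v) set"
  assumes "finite V" and "E \<subseteq> V \<times> V" and "acyclic E"
  shows "((\<exists>e\<in>E. is_cone_with_apex E (DT E) e) \<longleftrightarrow>
           (\<exists>e\<in>E. \<forall>F. maximal_directed_forest E F \<longrightarrow> e \<in> F))
       \<and> ((\<exists>e\<in>E. \<forall>F. maximal_directed_forest E F \<longrightarrow> e \<in> F) \<longleftrightarrow>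
           (\<exists>v\<in>V. in_degree E v = 1))
       \<and> ((\<exists>v\<in>V. in_degree E v = 1) \<longleftrightarrow>
           (\<Prod>v\<in>V. (int (in_degree E v) - 1)) = 0)
       \<and> (((\<Prod>v\<in>V. (int (in_degree E v) - 1)) = 0) \<longleftrightarrow>
           contractible_complex E (DT E))"
proof -
  have fin: "finite E" using assms(2) by (rule finite_subset) (simp add: assms(1))
  have "(\<exists>e\<in>E. is_cone_with_apex E (DT E) e) \<longleftrightarrow> (\<exists>e\<in>E. in_degree E (snd e) = 1)"
    using cone_apex_iff_in_degree_1[OF fin assms(3)] by blast
  moreover have "(\<exists>e\<in>E. \<forall>F. maximal_directed_forest E F \<longrightarrow> e \<in> F)
      \<longleftrightarrow> (\<exists>e\<in>E. in_degree E (snd e) = 1)"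
    using in_all_maximal_directed_forests_iff[OF fin assms(3)] by blast
  moreover have "(\<Prod>v\<in>V. (int (in_degree E v) - 1)) = 0 \<longleftrightarrow> (\<exists>v\<in>V. in_degree E v = 1)"
    using assms(1) by simp
  ultimately show ?thesis
    using ex_in_degree_1_iff_ex_edge[OF assms(2)] contractible_DT_iff[OF fin assms(3)] by blast
qed

end
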